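(* Let $X$ be a nonnegative absolutely continuous random variable with pdf $f$ satisfying $$e^{-\alpha x-\beta}\le f(x)\le 1\qquad\text{for all }x\ge0,$$ where $\alpha>0$ and $\beta\ge0$. Let $\overline F(t)=\mathbb P(X>t)$, $\Lambda(t)=-\log\overline F(t)$, $\delta(t)=\mathbb E[X\mid X>t]$, and for $t\ge0$ let $X_t=[X-t\mid X>t]$ be the residual lifetime with pdf $f_t(x)=f(x+t)/\overline F(t)$, $x>0$. Define the residual entropy $$H(X_t)=-\int_t^\infty\frac{f(x)}{\overline F(t)}\log\frac{f(x)}{\overline F(t)}\,\mathrm dx,$$ the weighted residual entropy $$H^w(X_t)=-\int_t^\infty x\,\frac{f(x)}{\overline F(t)}\log\frac{f(x)}{\overline F(t)}\,\mathrm dx,$$ and the residual varentropy $V(X_t)=\int_t^\infty\frac{f(x)}{\overline F(t)}\big(\log\frac{f(x)}{\overline F(t)}\big)^2\mathrm dx-[H(X_t)]^2$. Then for all $t\ge0$, $$V(X_t)\le\alpha\big[\Lambda(t)\delta(t)+H^w(X_t)\big]+\beta\big[\Lambda(t)+H(X_t)\big]-\big[\Lambda(t)+H(X_t)\big]^2.$$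
   Context: $[X\mid B]$ denotes a random variable distributed as $X$ conditional on the event $B$. The convention $0\log0=0$ is used. *)

theory Defs
  imports "HOL-Analysis.Analysis"
begin

text \<open>All quantities are expressed through the pdf f of the nonnegative
absolutely continuous random variable X (integrals w.r.t. Lebesgue measure).\<close>

definition surv :: "(real \<Rightarrow> real) \<Rightarrow> real \<Rightarrow> real" where
  "surv f t = (LINT x:{t<..}|lborel. f x)"

definition cumhaz :: "(real \<Rightarrow> real) \<Rightarrow> real \<Rightarrow> real" where
  "cumhaz f t = - ln (surv f t)"

definition cond_mean :: "(real \<Rightarrow> real) \<Rightarrow> real \<Rightarrow> real" where
  "cond_mean f t = (LINT x:{t<..}|lborel. x * f x) / surv f t"

definition res_entropy :: "(real \<Rightarrow> real) \<Rightarrow> real \<Rightarrow> real" where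
  "res_entropy f t =
     - (LINT x:{t<..}|lborel. (f x / surv f t) * ln (f x / surv f t))"

definition w_res_entropy :: "(real \<Rightarrow> real) \<Rightarrow> real \<Rightarrow> real" where
  "w_res_entropy f t =
     - (LINT x:{t<..}|lborel. x * (f x / surv f t) * ln (f x / surv f t))"

definition res_varentropy :: "(real \<Rightarrow> real) \<Rightarrow> real \<Rightarrow> real" where
  "res_varentropy f t =
     (LINT x:{t<..}|lborel. (f x / surv f t) * (ln (f x / surv f t))\<^sup>2)
       - (res_entropy f t)\<^sup>2"

end

theory Submission
  imports Defs
begin

text \<open>Write \<open>\<ell> = ln f\<close>. The residual density is \<open>f(x) / P(X > t)\<close>, so its logarithm is
\<open>\<ell> + \<Lambda>(t)\<close>; hence \<open>\<Lambda>(t) + H(X\<^sub>t) = -E[\<ell>(X) | X > t]\<close>,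
\<open>\<Lambda>(t)\<delta>(t) + H\<^sup>w(X\<^sub>t) = -E[X \<ell>(X) | X > t]\<close> and \<open>V(X\<^sub>t) = Var[\<ell>(X) | X > t]\<close>.
The bounds on \<open>f\<close> give \<open>-\<alpha>x - \<beta> \<le> \<ell>(x) \<le> 0\<close>, hence \<open>\<ell>\<^sup>2 \<le> -\<alpha>x\<ell> - \<beta>\<ell>\<close>
pointwise, and taking conditional expectations gives the inequality.\<close>

lemma surv_pos:
  fixes f :: "real \<Rightarrow> real"
  assumes integrable: "set_integrable lborel {t<..} f" and pos: "\<And>x. x > t \<Longrightarrow> f x > 0"
  shows "surv f t > 0"
proof -
  have "surv f t \<ge> 0"
    unfolding surv_def set_lebesgue_integral_def
    using pos by (intro Bochner_Integration.integral_nonneg) (auto simp: indicator_def less_imp_le)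
  moreover have "surv f t \<noteq> 0"
  proof
    assume "surv f t = 0"
    then have "{t<..} \<in> null_sets lborel"
      using integrable pos
      by (intro null_if_pos_func_has_zero_int[where f = "\<lambda>x. indicator {t<..} x * f x"])
        (auto simp: surv_def set_integrable_def set_lebesgue_integral_def indicator_def
          mult.assoc[symmetric] of_bool_conj[symmetric])
    then have "{t<..<t+1} \<in> null_sets lborel"
      by (rule null_sets_subset) auto
    then show False by (simp add: null_sets_def)
  qed
  ultimately show ?thesis by simp
qed

lemma set_integrable_mult_cmult:
  fixes f g :: "'a \<Rightarrow> real"
  assumes "set_integrable M A (\<lambda>x. f x * g x)"
  shows "set_integrable M A (\<lambda>x. f x * (c * g x))"
  using set_integrable_mult_right[of c, OF assms] by (simp add: mult.left_commute)

definition res_mean :: "(real \<Rightarrow> real) \<Rightarrow> real \<Rightarrow> (real \<Rightarrow> real) \<Rightarrow> real" where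
  "res_mean f t g = (LINT x:{t<..}|lborel. f x * g x) / surv f t"

lemma res_mean_altdef: "res_mean f t g = (LINT x:{t<..}|lborel. f x / surv f t * g x)"
  by (simp add: res_mean_def)

lemma res_mean_cong: "(\<And>x. x > t \<Longrightarrow> g x = h x) \<Longrightarrow> res_mean f t g = res_mean f t h"
  unfolding res_mean_def by (subst set_lebesgue_integral_cong) auto

lemma res_mean_add:
  assumes "set_integrable lborel {t<..} (\<lambda>x. f x * g x)"
    and "set_integrable lborel {t<..} (\<lambda>x. f x * h x)"
  shows "res_mean f t (\<lambda>x. g x + h x) = res_mean f t g + res_mean f t h"
  using set_integral_add(2)[OF assms] by (simp add: res_mean_def distrib_left add_divide_distrib)

lemma res_mean_diff:
  assumes "set_integrable lborel {t<..} (\<lambda>x. f x * g x)"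
    and "set_integrable lborel {t<..} (\<lambda>x. f x * h x)"
  shows "res_mean f t (\<lambda>x. g x - h x) = res_mean f t g - res_mean f t h"
  using set_integral_diff(2)[OF assms]
  by (simp add: res_mean_def right_diff_distrib diff_divide_distrib)

lemma res_mean_cmult: "res_mean f t (\<lambda>x. c * g x) = c * res_mean f t g"
  by (simp add: res_mean_def mult.left_commute)

lemma res_mean_const: "surv f t \<noteq> 0 \<Longrightarrow> res_mean f t (\<lambda>_. c) = c"
  by (simp add: res_mean_def surv_def)

lemma res_mean_mono:
  assumes "set_integrable lborel {t<..} (\<lambda>x. f x * g x)"
    and "set_integrable lborel {t<..} (\<lambda>x. f x * h x)"
    and "surv f t > 0" and "\<And>x. x > t \<Longrightarrow> f x \<ge> 0 \<and> g x \<le> h x"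
  shows "res_mean f t g \<le> res_mean f t h"
  unfolding res_mean_def using assms
  by (intro divide_right_mono set_integral_mono) (auto intro: mult_left_mono)

lemma ln_res_density:
  assumes "f x > 0" and "surv f t > 0"
  shows "ln (f x / surv f t) = ln (f x) + cumhaz f t"
  using assms by (simp add: ln_div cumhaz_def)

lemma cumhaz_plus_res_entropy:
  assumes S: "surv f t > 0" and pos: "\<And>x. x > t \<Longrightarrow> f x > 0"
    and int_f: "set_integrable lborel {t<..} f"
    and int_ent: "set_integrable lborel {t<..} (\<lambda>x. f x * ln (f x))"
  shows "cumhaz f t + res_entropy f t = - res_mean f t (\<lambda>x. ln (f x))"
proof -
  have "res_entropy f t = - res_mean f t (\<lambda>x. ln (f x) + cumhaz f t)"
    unfolding res_entropy_def res_mean_altdef[symmetric]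
    using S pos by (simp add: ln_res_density cong: res_mean_cong)
  also have "\<dots> = - res_mean f t (\<lambda>x. ln (f x)) - cumhaz f t"
    using S int_f int_ent by (simp add: res_mean_add res_mean_const)
  finally show ?thesis by simp
qed

lemma cumhaz_cond_mean_plus_w_res_entropy:
  assumes S: "surv f t > 0" and pos: "\<And>x. x > t \<Longrightarrow> f x > 0"
    and int_mean: "set_integrable lborel {t<..} (\<lambda>x. f x * x)"
    and int_went: "set_integrable lborel {t<..} (\<lambda>x. f x * (x * ln (f x)))"
  shows "cumhaz f t * cond_mean f t + w_res_entropy f t
    = - res_mean f t (\<lambda>x. x * ln (f x))"
proof -
  have cond_mean: "cond_mean f t = res_mean f t (\<lambda>x. x)"
    by (simp add: cond_mean_def res_mean_def mult.commute)
  have "w_res_entropy f t = - res_mean f t (\<lambda>x. x * ln (f x / surv f t))"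
    unfolding w_res_entropy_def res_mean_altdef by (simp add: mult_ac)
  also have "\<dots> = - res_mean f t (\<lambda>x. x * ln (f x) + cumhaz f t * x)"
    using S pos by (auto simp: ln_res_density algebra_simps intro: res_mean_cong)
  also have "\<dots> = - res_mean f t (\<lambda>x. x * ln (f x)) - cumhaz f t * cond_mean f t"
    using set_integrable_mult_cmult[OF int_mean] int_went
    by (simp add: res_mean_add res_mean_cmult cond_mean)
  finally show ?thesis by simp
qed

lemma res_varentropy_eq_variance:
  assumes S: "surv f t > 0" and pos: "\<And>x. x > t \<Longrightarrow> f x > 0"
    and int_f: "set_integrable lborel {t<..} f"
    and int_ent: "set_integrable lborel {t<..} (\<lambda>x. f x * ln (f x))"
    and int_var: "set_integrable lborel {t<..} (\<lambda>x. f x * (ln (f x))\<^sup>2)"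
  shows "res_varentropy f t
    = res_mean f t (\<lambda>x. (ln (f x))\<^sup>2) - (res_mean f t (\<lambda>x. ln (f x)))\<^sup>2"
proof -
  let ?\<Lambda> = "cumhaz f t"
  have entropy: "res_entropy f t = - res_mean f t (\<lambda>x. ln (f x)) - ?\<Lambda>"
    using cumhaz_plus_res_entropy[OF S pos int_f int_ent] by linarith
  have "res_mean f t (\<lambda>x. (ln (f x / surv f t))\<^sup>2)
      = res_mean f t (\<lambda>x. (ln (f x))\<^sup>2 + 2 * ?\<Lambda> * ln (f x) + ?\<Lambda>\<^sup>2)"
    using S pos by (auto simp: ln_res_density power2_sum intro: res_mean_cong)
  also have "\<dots> = res_mean f t (\<lambda>x. (ln (f x))\<^sup>2)
      + 2 * ?\<Lambda> * res_mean f t (\<lambda>x. ln (f x)) + ?\<Lambda>\<^sup>2"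
  proof -
    have "set_integrable lborel {t<..} (\<lambda>x. f x * (2 * ?\<Lambda> * ln (f x)))"
      by (rule set_integrable_mult_cmult[OF int_ent])
    moreover have "set_integrable lborel {t<..} (\<lambda>x. f x * ?\<Lambda>\<^sup>2)"
      using set_integrable_mult_left[of "?\<Lambda>\<^sup>2", OF int_f] .
    ultimately show ?thesis
      using S int_var by (simp add: res_mean_add distrib_left res_mean_cmult res_mean_const)
  qed
  finally show ?thesis
    unfolding res_varentropy_def res_mean_altdef[symmetric] entropy
    by (simp add: power2_eq_square algebra_simps)
qed

lemma power2_ln_le_of_exp_le:
  fixes a b x y :: real
  assumes lower: "exp (- a * x - b) \<le> y" and upper: "y \<le> 1"
  shows "(ln y)\<^sup>2 \<le> - a * (x * ln y) - b * ln y"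
proof -
  have "y > 0" using lower by (meson exp_gt_zero less_le_trans)
  then have "ln y \<le> 0" and "- a * x - b \<le> ln y"
    using lower upper by (simp, metis ln_exp ln_le_cancel_iff exp_gt_zero)
  then have "ln y * ln y \<le> ln y * (- a * x - b)"
    by (rule mult_left_mono_neg[rotated])
  then show ?thesis by (simp add: power2_eq_square algebra_simps)
qed

lemma res_mean_power2_ln_le:
  assumes S: "surv f t > 0"
    and bounds: "\<And>x. x > t \<Longrightarrow> exp (- a * x - b) \<le> f x \<and> f x \<le> 1"
    and int_var: "set_integrable lborel {t<..} (\<lambda>x. f x * (ln (f x))\<^sup>2)"
    and int_went: "set_integrable lborel {t<..} (\<lambda>x. f x * (x * ln (f x)))"
    and int_ent: "set_integrable lborel {t<..} (\<lambda>x. f x * ln (f x))"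
  shows "res_mean f t (\<lambda>x. (ln (f x))\<^sup>2)
    \<le> - a * res_mean f t (\<lambda>x. x * ln (f x)) - b * res_mean f t (\<lambda>x. ln (f x))"
proof -
  have int_went': "set_integrable lborel {t<..} (\<lambda>x. f x * (- a * (x * ln (f x))))"
    and int_ent': "set_integrable lborel {t<..} (\<lambda>x. f x * (b * ln (f x)))"
    by (fact set_integrable_mult_cmult[OF int_went] set_integrable_mult_cmult[OF int_ent])+
  have "res_mean f t (\<lambda>x. (ln (f x))\<^sup>2)
      \<le> res_mean f t (\<lambda>x. - a * (x * ln (f x)) - b * ln (f x))"
  proof (rule res_mean_mono[OF int_var _ S])
    show "set_integrable lborel {t<..} (\<lambda>x. f x * (- a * (x * ln (f x)) - b * ln (f x)))"
      using set_integral_diff(1)[OF int_went' int_ent'] by (simp add: right_diff_distrib)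
    show "0 \<le> f x \<and> (ln (f x))\<^sup>2 \<le> - a * (x * ln (f x)) - b * ln (f x)" if "x > t" for x
      using bounds[OF that] power2_ln_le_of_exp_le order.trans[OF less_imp_le[OF exp_gt_zero]]
      by blast
  qed
  also have "\<dots> = - a * res_mean f t (\<lambda>x. x * ln (f x)) - b * res_mean f t (\<lambda>x. ln (f x))"
    by (simp only: res_mean_diff[OF int_went' int_ent'] res_mean_cmult)
  finally show ?thesis .
qed

theorem theorem3p9:
  fixes f :: "real \<Rightarrow> real" and \<alpha> \<beta> t :: real
  assumes meas: "f \<in> borel_measurable lborel"
    and zero_neg: "\<And>x. x < 0 \<Longrightarrow> f x = 0"
    and int_f: "set_integrable lborel {0..} f"
    and total: "(LINT x:{0..}|lborel. f x) = 1"
    and bounds: "\<And>x. x \<ge> 0 \<Longrightarrow> exp (- \<alpha> * x - \<beta>) \<le> f x \<and> f x \<le> 1"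
    and alpha: "\<alpha> > 0" and beta: "\<beta> \<ge> 0"
    and int_mean: "set_integrable lborel {0..} (\<lambda>x. x * f x)"
    and int_ent: "set_integrable lborel {0..} (\<lambda>x. f x * ln (f x))"
    and int_went: "set_integrable lborel {0..} (\<lambda>x. x * f x * ln (f x))"
    and int_var: "set_integrable lborel {0..} (\<lambda>x. f x * (ln (f x))\<^sup>2)"
    and t: "t \<ge> 0"
  shows "res_varentropy f t
     \<le> \<alpha> * (cumhaz f t * cond_mean f t + w_res_entropy f t)
       + \<beta> * (cumhaz f t + res_entropy f t)
       - (cumhaz f t + res_entropy f t)\<^sup>2"
proof -
  have restrict: "set_integrable lborel {t<..} g"
    if "set_integrable lborel {0..} g" for g :: "real \<Rightarrow> real"
    using t by (intro set_integrable_subset[OF that]) auto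
  have bounds': "exp (- \<alpha> * x - \<beta>) \<le> f x \<and> f x \<le> 1" if "x > t" for x
    using bounds that t by simp
  have pos: "f x > 0" if "x > t" for x
    using bounds'[OF that] by (meson exp_gt_zero less_le_trans)
  note i_f = restrict[OF int_f] and i_ent = restrict[OF int_ent] and i_var = restrict[OF int_var]
  have i_mean: "set_integrable lborel {t<..} (\<lambda>x. f x * x)"
    using restrict[OF int_mean] by (simp add: mult.commute)
  have i_went: "set_integrable lborel {t<..} (\<lambda>x. f x * (x * ln (f x)))"
    using restrict[OF int_went] by (simp add: mult_ac)
  have S: "surv f t > 0" by (rule surv_pos[OF i_f pos])
  show ?thesis
    using res_mean_power2_ln_le[OF S bounds' i_var i_went i_ent]
      res_varentropy_eq_variance[OF S pos i_f i_ent i_var]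
      cumhaz_plus_res_entropy[OF S pos i_f i_ent]
      cumhaz_cond_mean_plus_w_res_entropy[OF S pos i_mean i_went]
    by (simp add: power2_eq_square)
qed

end
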